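(* Let $I$ be a nonempty set and $H$ a real Hilbert space; for each $i\in I$ let $C_i$ be a nonempty compact convex subset of $H$. Equip $H^I$ with the product topology generated by the norm topology on each factor $H$. For each $i\in I$ let $T_i:C_i\to C_i$ be nonexpansive with $\mathrm{Fix}(T_i)\neq\emptyset$, and let $f_i:C_i\to C_i$ be an $\alpha_i$-contraction, i.e. $\|f_i(x)-f_i(y)\|\le\alpha_i\|x-y\|$ with $0\le\alpha_i<1$. Let $\{\epsilon_n\}\subseteq(0,1)$ with $\lim_n\epsilon_n=0$. Then for each $i\in I$ there exist a unique sunny nonexpansive retraction $P_i$ of $C_i$ onto $\mathrm{Fix}(T_i)$ and a point $x_i\in C_i$ such that the sequence $\{g_n\}$ in $H^I$ defined by $g_n(i)=z_{n,i}$ $(i\in I)$, where $z_{n,i}\in C_i$ satisfies $$z_{n,i}=\epsilon_nf_i(z_{n,i})+(1-\epsilon_n)\frac1n\sum_{k=1}^nT_i^kz_{n,i},$$ converges in the product topology of $H^I$ to the function $g:I\to H$ defined by $g(i)=P_ix_i$.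
   Context: A retraction $P$ of $C$ onto $D\subseteq C$ (i.e. $Px=x$ for $x\in D$) is sunny if $P(Px+t(x-Px))=Px$ whenever $x\in C$, $t\ge0$ and $Px+t(x-Px)\in C$. $\mathrm{Fix}(T)$ is the set of fixed points of $T$. *)

theory Defs
  imports "HOL-Analysis.Analysis"
begin

definition nonexpansive_on :: "'a::real_normed_vector set \<Rightarrow> ('a \<Rightarrow> 'a) \<Rightarrow> bool" where
  "nonexpansive_on C T \<longleftrightarrow> (\<forall>x\<in>C. \<forall>y\<in>C. norm (T x - T y) \<le> norm (x - y))"

definition Fix :: "'a set \<Rightarrow> ('a \<Rightarrow> 'a) \<Rightarrow> 'a set" where
  "Fix C T = {x \<in> C. T x = x}"

definition retraction_onto :: "'a set \<Rightarrow> 'a set \<Rightarrow> ('a \<Rightarrow> 'a) \<Rightarrow> bool" where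
  "retraction_onto C D P \<longleftrightarrow> D \<subseteq> C \<and> P ` C \<subseteq> D \<and> (\<forall>x\<in>D. P x = x)"

definition sunny :: "'a::real_vector set \<Rightarrow> ('a \<Rightarrow> 'a) \<Rightarrow> bool" where
  "sunny C P \<longleftrightarrow> (\<forall>x\<in>C. \<forall>t::real. t \<ge> 0 \<longrightarrow> P x + t *\<^sub>R (x - P x) \<in> C \<longrightarrow>
      P (P x + t *\<^sub>R (x - P x)) = P x)"

definition sunny_nonexpansive_retraction :: "'a::real_normed_vector set \<Rightarrow> 'a set \<Rightarrow> ('a \<Rightarrow> 'a) \<Rightarrow> bool" where
  "sunny_nonexpansive_retraction C D P \<longleftrightarrow> retraction_onto C D P \<and> sunny C P \<and> nonexpansive_on C P"

end

theory Submission
  imports Defs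
begin

(* The metric projection P onto the compact convex set Fix(T) is a sunny nonexpansive retraction,
   and it is the only one: every sunny nonexpansive retraction Q satisfies the variational
   inequality <x - Q x, p - Q x> \<le> 0 for all fixed points p, which characterises P x.
   Writing S_n z for the Cesaro mean of T z, ..., T^n z, nonexpansiveness of T yields
   |z - T z|^2 \<le> 8 <z - S_n z, z - p> for every fixed point p. For the implicit iterate z_n the
   right-hand side is epsilon_n times a bounded quantity, so z_n - T z_n \<rightarrow> 0 and
   <f z_n - z_n, z_n - p> is asymptotically nonnegative. Hence every limit point l of (z_n) is a
   fixed point of T with l = P (f l). By Banach's theorem P \<circ> f has exactly one fixed point q,
   so by compactness z_n \<rightarrow> q = P (f q); the point x of the statement is f q. *)

section \<open>The metric projection onto a compact convex set\<close>

text \<open>The library's \<^const>\<open>closest_point\<close> needs a \<^class>\<open>heine_borel\<close> space; here the ambient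
  space is an arbitrary inner product space and compactness of the target set provides the
  nearest point instead.\<close>

definition metric_proj :: "'a::real_inner set \<Rightarrow> 'a \<Rightarrow> 'a" where
  "metric_proj D a = (SOME y. y \<in> D \<and> (\<forall>z\<in>D. dist a y \<le> dist a z))"

lemma
  fixes D :: "'a::real_inner set"
  assumes "compact D" "D \<noteq> {}"
  shows metric_proj_in: "metric_proj D a \<in> D"
    and metric_proj_le: "z \<in> D \<Longrightarrow> dist a (metric_proj D a) \<le> dist a z"
proof -
  have "\<exists>y\<in>D. \<forall>z\<in>D. dist a y \<le> dist a z"
    by (rule continuous_attains_inf[OF assms]) (intro continuous_intros)
  then have "metric_proj D a \<in> D \<and> (\<forall>z\<in>D. dist a (metric_proj D a) \<le> dist a z)"
    unfolding metric_proj_def using someI_ex[of "\<lambda>y. y \<in> D \<and> (\<forall>z\<in>D. dist a y \<le> dist a z)"]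
    by blast
  then show "metric_proj D a \<in> D" and "z \<in> D \<Longrightarrow> dist a (metric_proj D a) \<le> dist a z"
    by auto
qed

lemma metric_proj_inner_le:
  fixes D :: "'a::real_inner set"
  assumes "compact D" "convex D" "y \<in> D"
  shows "inner (a - metric_proj D a) (y - metric_proj D a) \<le> 0"
proof -
  have "D \<noteq> {}"
    using assms(3) by blast
  then show ?thesis
    using any_closest_point_dot[OF assms(2) compact_imp_closed[OF assms(1)] _ assms(3)]
      metric_proj_in[OF assms(1)] metric_proj_le[OF assms(1)] by blast
qed

lemma metric_proj_eqI:
  fixes D :: "'a::real_inner set"
  assumes "compact D" "convex D" "y \<in> D" and VI: "\<And>z. z \<in> D \<Longrightarrow> inner (a - y) (z - y) \<le> 0"
  shows "metric_proj D a = y"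
proof -
  let ?p = "metric_proj D a"
  have "?p \<in> D"
    using metric_proj_in[OF assms(1)] assms(3) by blast
  then have "inner (?p - y) (?p - y) = inner (a - y) (?p - y) + inner (a - ?p) (y - ?p)"
    by (simp add: inner_diff_left inner_diff_right inner_commute)
  also have "\<dots> \<le> 0"
    using VI[OF \<open>?p \<in> D\<close>] metric_proj_inner_le[OF assms(1-3), of a] by linarith
  finally have "?p - y = 0"
    by (metis inner_gt_zero_iff not_le)
  then show ?thesis
    by simp
qed

lemma metric_proj_nonexpansive:
  fixes D :: "'a::real_inner set"
  assumes "compact D" "convex D" "D \<noteq> {}"
  shows "norm (metric_proj D x - metric_proj D y) \<le> norm (x - y)"
proof -
  have "inner (x - metric_proj D x) (metric_proj D y - metric_proj D x) \<le> 0"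
    and "inner (y - metric_proj D y) (metric_proj D x - metric_proj D y) \<le> 0"
    using metric_proj_inner_le[OF assms(1,2)] metric_proj_in[OF assms(1,3)] by blast+
  then show ?thesis
    unfolding norm_le using inner_ge_zero[of "(x - metric_proj D x) - (y - metric_proj D y)"]
    by (simp add: inner_add inner_diff inner_commute)
qed

section \<open>Sunny nonexpansive retractions\<close>

lemma norm_add_scaleR_power2:
  fixes a b :: "'a::real_inner"
  shows "(norm (a + t *\<^sub>R b))\<^sup>2 = (norm a)\<^sup>2 + 2 * inner a b * t + (norm b)\<^sup>2 * t\<^sup>2"
  unfolding power2_norm_eq_inner
  by (simp add: inner_add_left inner_add_right inner_commute algebra_simps power2_eq_square)

lemma nonneg_if_nonneg_linear_plus_quadratic:
  fixes a b :: real
  assumes "\<And>t. 0 < t \<Longrightarrow> t \<le> 1 \<Longrightarrow> 0 \<le> a * t + b * t\<^sup>2"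
  shows "0 \<le> a"
proof -
  have "0 \<le> a + b * t" if "0 < t" "t \<le> 1" for t
  proof -
    have "0 \<le> t * (a + b * t)"
      using assms[OF that] by (simp add: power2_eq_square algebra_simps)
    then show ?thesis
      using that by (simp add: zero_le_mult_iff)
  qed
  then have "\<forall>\<^sub>F t in at_right 0. 0 \<le> a + b * t"
    using eventually_at_right_real[of 0 1] by (auto elim: eventually_mono)
  moreover have "((\<lambda>t. a + b * t) \<longlongrightarrow> a) (at_right 0)"
    by (auto intro!: tendsto_eq_intros)
  ultimately show ?thesis
    using tendsto_le[OF trivial_limit_at_right_real] tendsto_const by blast
qed

lemma sunny_nonexpansive_retraction_metric_proj:
  fixes C D :: "'a::real_inner set"
  assumes "compact D" "convex D" "D \<noteq> {}" "D \<subseteq> C"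
  shows "sunny_nonexpansive_retraction C D (metric_proj D)"
proof -
  have "retraction_onto C D (metric_proj D)"
    unfolding retraction_onto_def
    using assms metric_proj_in[OF assms(1,3)] metric_proj_eqI[OF assms(1,2)] by auto
  moreover have "sunny C (metric_proj D)"
    unfolding sunny_def
  proof (intro ballI allI impI)
    fix x and t :: real
    assume "0 \<le> t"
    let ?p = "metric_proj D x"
    show "metric_proj D (?p + t *\<^sub>R (x - ?p)) = ?p"
    proof (rule metric_proj_eqI[OF assms(1,2) metric_proj_in[OF assms(1,3)]])
      fix z assume "z \<in> D"
      then show "inner (?p + t *\<^sub>R (x - ?p) - ?p) (z - ?p) \<le> 0"
        using metric_proj_inner_le[OF assms(1,2)] \<open>0 \<le> t\<close> by (simp add: mult_nonneg_nonpos)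
    qed
  qed
  moreover have "nonexpansive_on C (metric_proj D)"
    unfolding nonexpansive_on_def using metric_proj_nonexpansive[OF assms(1-3)] by blast
  ultimately show ?thesis
    unfolding sunny_nonexpansive_retraction_def by blast
qed

lemma sunny_nonexpansive_retraction_inner_le:
  fixes C D :: "'a::real_inner set"
  assumes Q: "sunny_nonexpansive_retraction C D Q" and "convex C" "x \<in> C" "y \<in> D"
  shows "inner (x - Q x) (y - Q x) \<le> 0"
proof -
  have "D \<subseteq> C" "Q ` C \<subseteq> D" "\<And>x. x \<in> D \<Longrightarrow> Q x = x" "sunny C Q" "nonexpansive_on C Q"
    using Q unfolding sunny_nonexpansive_retraction_def retraction_onto_def by auto
  \<comment> \<open>Q is constant on the segment from Q x to x, so moving along it cannot bring Q x closer to
    the fixed point y; this is a quadratic inequality in the step length t.\<close>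
  have "0 \<le> 2 * inner (Q x - y) (x - Q x) * t + (norm (x - Q x))\<^sup>2 * t\<^sup>2"
    if "0 < t" "t \<le> 1" for t
  proof -
    let ?w = "Q x + t *\<^sub>R (x - Q x)"
    have "?w = (1 - t) *\<^sub>R Q x + t *\<^sub>R x"
      by (simp add: algebra_simps)
    then have "?w \<in> C"
      using convexD_alt[OF \<open>convex C\<close>, of "Q x" x t] \<open>Q ` C \<subseteq> D\<close> \<open>D \<subseteq> C\<close> assms(3,4) that
      by auto
    then have "Q ?w = Q x"
      using \<open>sunny C Q\<close> assms(3) that unfolding sunny_def by simp
    moreover have "norm (Q ?w - Q y) \<le> norm (?w - y)"
      using \<open>nonexpansive_on C Q\<close> \<open>?w \<in> C\<close> \<open>D \<subseteq> C\<close> \<open>y \<in> D\<close>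
      unfolding nonexpansive_on_def by blast
    moreover have "?w - y = (Q x - y) + t *\<^sub>R (x - Q x)"
      by simp
    ultimately have "norm (Q x - y) \<le> norm ((Q x - y) + t *\<^sub>R (x - Q x))"
      using \<open>\<And>x. x \<in> D \<Longrightarrow> Q x = x\<close> \<open>y \<in> D\<close> by simp
    then have "(norm (Q x - y))\<^sup>2 \<le> (norm ((Q x - y) + t *\<^sub>R (x - Q x)))\<^sup>2"
      by (simp add: power_mono)
    then show ?thesis
      by (simp add: norm_add_scaleR_power2)
  qed
  then have "0 \<le> 2 * inner (Q x - y) (x - Q x)"
    by (rule nonneg_if_nonneg_linear_plus_quadratic)
  then show ?thesis
    by (simp add: inner_diff_left inner_diff_right inner_commute)
qed

lemma sunny_nonexpansive_retraction_unique:
  fixes C D :: "'a::real_inner set"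
  assumes "sunny_nonexpansive_retraction C D Q" "convex C" "compact D" "convex D" "y \<in> C"
  shows "Q y = metric_proj D y"
proof -
  have "Q y \<in> D"
    using assms(1,5) unfolding sunny_nonexpansive_retraction_def retraction_onto_def by auto
  then show ?thesis
    using sunny_nonexpansive_retraction_inner_le[OF assms(1,2,5)]
    by (intro metric_proj_eqI[symmetric, OF assms(3,4)]) auto
qed

section \<open>Fixed points and iterates of nonexpansive maps\<close>

lemma Fix_subset: "Fix C T \<subseteq> C"
  by (auto simp: Fix_def)

lemma nonexpansive_on_imp_continuous_on:
  "nonexpansive_on C T \<Longrightarrow> continuous_on C T"
  unfolding nonexpansive_on_def
  by (intro lipschitz_on_continuous_on[of 1]) (simp add: lipschitz_on_def dist_norm)

lemma compact_Fix:
  fixes C :: "'a::real_normed_vector set"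
  assumes "compact C" "nonexpansive_on C T"
  shows "compact (Fix C T)"
proof -
  have "closed {x \<in> C. T x - x = 0}"
    using nonexpansive_on_imp_continuous_on[OF assms(2)] compact_imp_closed[OF assms(1)]
    by (intro continuous_closed_preimage_constant continuous_intros)
  moreover have "Fix C T = C \<inter> {x \<in> C. T x - x = 0}"
    by (auto simp: Fix_def)
  ultimately show ?thesis
    using compact_Int_closed[OF assms(1)] by simp
qed

lemma norm_convex_combination_power2:
  fixes w x y :: "'a::real_inner"
  shows "(norm (w - ((1 - u) *\<^sub>R x + u *\<^sub>R y)))\<^sup>2
     = (1 - u) * (norm (w - x))\<^sup>2 + u * (norm (w - y))\<^sup>2 - u * (1 - u) * (norm (x - y))\<^sup>2"
  unfolding power2_norm_eq_inner
  by (simp add: inner_add_left inner_add_right inner_diff_left inner_diff_right inner_commute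
      algebra_simps power2_eq_square)

lemma convex_Fix:
  fixes C :: "'a::real_inner set"
  assumes "convex C" "nonexpansive_on C T"
  shows "convex (Fix C T)"
  unfolding convex_alt
proof (intro ballI allI impI)
  fix x y and u :: real
  assume x: "x \<in> Fix C T" and y: "y \<in> Fix C T" and u: "0 \<le> u \<and> u \<le> 1"
  define z where "z = (1 - u) *\<^sub>R x + u *\<^sub>R y"
  define d where "d = norm (x - y)"
  have "x \<in> C" "T x = x" "y \<in> C" "T y = y"
    using x y by (auto simp: Fix_def)
  then have "z \<in> C"
    unfolding z_def using convexD_alt[OF assms(1)] u by auto
  have "z - x = u *\<^sub>R (y - x)" and "z - y = (1 - u) *\<^sub>R (x - y)"
    unfolding z_def by (simp_all add: algebra_simps)
  then have "norm (z - x) = u * d" and "norm (z - y) = (1 - u) * d"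
    using u by (simp_all add: d_def norm_minus_commute)
  moreover have "norm (T z - x) \<le> norm (z - x)" and "norm (T z - y) \<le> norm (z - y)"
    using assms(2) \<open>z \<in> C\<close> \<open>x \<in> C\<close> \<open>T x = x\<close> \<open>y \<in> C\<close> \<open>T y = y\<close>
    unfolding nonexpansive_on_def by force+
  ultimately have "norm (T z - x) \<le> u * d" and "norm (T z - y) \<le> (1 - u) * d"
    by simp_all
  then have "(norm (T z - x))\<^sup>2 \<le> (u * d)\<^sup>2" and "(norm (T z - y))\<^sup>2 \<le> ((1 - u) * d)\<^sup>2"
    by (auto intro: power_mono)
  \<comment> \<open>In an inner product space, z is the only point this close to both x and y.\<close>
  have "(norm (T z - z))\<^sup>2
      = (1 - u) * (norm (T z - x))\<^sup>2 + u * (norm (T z - y))\<^sup>2 - u * (1 - u) * d\<^sup>2"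
    unfolding z_def d_def by (rule norm_convex_combination_power2)
  also have "\<dots> \<le> (1 - u) * (u * d)\<^sup>2 + u * ((1 - u) * d)\<^sup>2 - u * (1 - u) * d\<^sup>2"
    using \<open>(norm (T z - x))\<^sup>2 \<le> (u * d)\<^sup>2\<close> \<open>(norm (T z - y))\<^sup>2 \<le> ((1 - u) * d)\<^sup>2\<close> u
    by (intro diff_mono add_mono mult_left_mono) auto
  also have "\<dots> = 0"
    by (simp add: power2_eq_square algebra_simps)
  finally have "T z = z"
    by simp
  then show "(1 - u) *\<^sub>R x + u *\<^sub>R y \<in> Fix C T"
    using \<open>z \<in> C\<close> unfolding Fix_def z_def by simp
qed

lemma sunny_nonexpansive_retraction_onto_Fix:
  fixes C :: "'a::real_inner set"
  assumes "compact C" "convex C" "nonexpansive_on C T" "Fix C T \<noteq> {}"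
  shows "sunny_nonexpansive_retraction C (Fix C T) (metric_proj (Fix C T))"
    and "sunny_nonexpansive_retraction C (Fix C T) Q \<Longrightarrow> y \<in> C \<Longrightarrow> Q y = metric_proj (Fix C T) y"
  using sunny_nonexpansive_retraction_metric_proj[OF compact_Fix[OF assms(1,3)] convex_Fix[OF assms(2,3)]
      assms(4) Fix_subset]
    sunny_nonexpansive_retraction_unique[OF _ assms(2) compact_Fix[OF assms(1,3)] convex_Fix[OF assms(2,3)]]
  by blast+

lemma funpow_image_subset: "T ` C \<subseteq> C \<Longrightarrow> (T ^^ k) ` C \<subseteq> C"
  by (induction k) auto

lemma nonexpansive_on_funpow:
  assumes "T ` C \<subseteq> C" "nonexpansive_on C T"
  shows "nonexpansive_on C (T ^^ k)"
proof (induction k)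
  case 0
  then show ?case
    by (simp add: nonexpansive_on_def)
next
  case (Suc k)
  show ?case
    unfolding nonexpansive_on_def
  proof (intro ballI)
    fix x y assume "x \<in> C" "y \<in> C"
    then have "norm (T ((T ^^ k) x) - T ((T ^^ k) y)) \<le> norm ((T ^^ k) x - (T ^^ k) y)"
      using assms funpow_image_subset[OF assms(1)] unfolding nonexpansive_on_def by blast
    also have "\<dots> \<le> norm (x - y)"
      using Suc.IH \<open>x \<in> C\<close> \<open>y \<in> C\<close> unfolding nonexpansive_on_def by blast
    finally show "norm ((T ^^ Suc k) x - (T ^^ Suc k) y) \<le> norm (x - y)"
      by simp
  qed
qed

lemma funpow_Fix: "p \<in> Fix C T \<Longrightarrow> (T ^^ k) p = p"
  by (induction k) (auto simp: Fix_def)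

section \<open>Cesaro means of a nonexpansive map\<close>

lemma norm_diff_power2_le_inner:
  fixes a b p :: "'a::real_inner"
  assumes "norm (b - p) \<le> norm (a - p)"
  shows "(norm (a - b))\<^sup>2 \<le> 2 * inner (a - b) (a - p)"
proof -
  have "(norm (b - p))\<^sup>2 \<le> (norm (a - p))\<^sup>2"
    using assms by (intro power_mono) auto
  moreover have "2 * inner (a - b) (a - p) = (norm (a - b))\<^sup>2 + (norm (a - p))\<^sup>2 - (norm (b - p))\<^sup>2"
    using dot_norm_neg[of "a - b" "a - p"] by (simp add: norm_minus_commute)
  ultimately show ?thesis
    by linarith
qed

definition cesaro_mean :: "('a \<Rightarrow> 'a) \<Rightarrow> nat \<Rightarrow> 'a \<Rightarrow> 'a::real_vector" where
  "cesaro_mean T n z = (1 / real n) *\<^sub>R (\<Sum>k=1..n. (T ^^ k) z)"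

lemma cesaro_mean_in:
  assumes "convex C" "T ` C \<subseteq> C" "z \<in> C" "1 \<le> n"
  shows "cesaro_mean T n z \<in> C"
  unfolding cesaro_mean_def scaleR_sum_right
  using assms funpow_image_subset[OF assms(2)] by (intro convex_sum) auto

lemma sum_displacements_le_cesaro_inner:
  fixes C :: "'a::real_inner set"
  assumes "T ` C \<subseteq> C" "nonexpansive_on C T" "z \<in> C" "p \<in> Fix C T" "1 \<le> n"
  shows "(\<Sum>k=1..n. (norm (z - (T ^^ k) z))\<^sup>2) \<le> 2 * real n * inner (z - cesaro_mean T n z) (z - p)"
proof -
  have "p \<in> C"
    using assms(4) by (simp add: Fix_def)
  have "norm ((T ^^ k) z - (T ^^ k) p) \<le> norm (z - p)" for k
    using nonexpansive_on_funpow[OF assms(1,2), of k] assms(3) \<open>p \<in> C\<close>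
    unfolding nonexpansive_on_def by blast
  then have "norm ((T ^^ k) z - p) \<le> norm (z - p)" for k
    by (simp add: funpow_Fix[OF assms(4)])
  then have "(\<Sum>k=1..n. (norm (z - (T ^^ k) z))\<^sup>2) \<le> (\<Sum>k=1..n. 2 * inner (z - (T ^^ k) z) (z - p))"
    by (intro sum_mono norm_diff_power2_le_inner)
  also have "\<dots> = 2 * inner (\<Sum>k=1..n. z - (T ^^ k) z) (z - p)"
    by (simp only: inner_sum_left sum_distrib_left)
  also have "(\<Sum>k=1..n. z - (T ^^ k) z) = real n *\<^sub>R (z - cesaro_mean T n z)"
    using assms(5) by (simp add: cesaro_mean_def sum_subtractf sum_constant_scaleR scaleR_diff_right)
  finally show ?thesis
    by simp
qed

lemma displacement_le_sum_displacements:
  fixes C :: "'a::real_inner set"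
  assumes "T ` C \<subseteq> C" "nonexpansive_on C T" "z \<in> C"
  shows "real n * (norm (z - T z))\<^sup>2 \<le> 4 * (\<Sum>k=1..n. (norm (z - (T ^^ k) z))\<^sup>2)"
proof -
  define a where "a k = norm (z - (T ^^ k) z)" for k
  \<comment> \<open>Triangle inequality through the point (T ^^ Suc k) z; summing over k < n uses a 0 = 0.\<close>
  have "(norm (z - T z))\<^sup>2 \<le> 2 * (a (Suc k))\<^sup>2 + 2 * (a k)\<^sup>2" for k
  proof -
    have "norm (T ((T ^^ k) z) - T z) \<le> norm ((T ^^ k) z - z)"
      using assms funpow_image_subset[OF assms(1)] unfolding nonexpansive_on_def by blast
    then have "norm ((T ^^ Suc k) z - T z) \<le> a k"
      unfolding a_def by (simp add: norm_minus_commute)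
    then have "norm (z - T z) \<le> a (Suc k) + a k"
      using norm_triangle_ineq[of "z - (T ^^ Suc k) z" "(T ^^ Suc k) z - T z"]
      unfolding a_def by simp
    then have "(norm (z - T z))\<^sup>2 \<le> (a (Suc k) + a k)\<^sup>2"
      by (intro power_mono) auto
    also have "\<dots> \<le> 2 * (a (Suc k))\<^sup>2 + 2 * (a k)\<^sup>2"
      using sum_squares_ge_zero[of "a (Suc k) - a k" 0] by (simp add: power2_eq_square algebra_simps)
    finally show ?thesis .
  qed
  then have "(\<Sum>k<n. (norm (z - T z))\<^sup>2) \<le> (\<Sum>k<n. 2 * (a (Suc k))\<^sup>2 + 2 * (a k)\<^sup>2)"
    by (rule sum_mono)
  then have "real n * (norm (z - T z))\<^sup>2 \<le> 2 * (\<Sum>k<n. (a (Suc k))\<^sup>2) + 2 * (\<Sum>k<n. (a k)\<^sup>2)"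
    by (simp only: sum_constant card_lessThan sum.distrib sum_distrib_left)
  also have "(\<Sum>k<n. (a k)\<^sup>2) \<le> (\<Sum>k<Suc n. (a k)\<^sup>2)"
    by (simp add: sum.lessThan_Suc)
  also have "(\<Sum>k<Suc n. (a k)\<^sup>2) = (\<Sum>k<n. (a (Suc k))\<^sup>2)"
    by (simp only: sum.lessThan_Suc_shift) (simp add: a_def)
  also have "(\<Sum>k<n. (a (Suc k))\<^sup>2) = (\<Sum>k=1..n. (a k)\<^sup>2)"
    by (simp add: sum.atLeast1_atMost_eq)
  finally show ?thesis
    unfolding a_def by simp
qed

lemma displacement_le_cesaro_inner:
  fixes C :: "'a::real_inner set"
  assumes "T ` C \<subseteq> C" "nonexpansive_on C T" "z \<in> C" "p \<in> Fix C T" "1 \<le> n"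
  shows "(norm (z - T z))\<^sup>2 \<le> 8 * inner (z - cesaro_mean T n z) (z - p)"
proof -
  have "real n * (norm (z - T z))\<^sup>2 \<le> real n * (8 * inner (z - cesaro_mean T n z) (z - p))"
    using displacement_le_sum_displacements[OF assms(1-3), of n]
      sum_displacements_le_cesaro_inner[OF assms] by linarith
  then show ?thesis
    using assms(5) by (simp add: mult_le_cancel_left_pos)
qed

section \<open>Convergence of the implicit scheme\<close>

lemma compact_LIMSEQ_if_unique_limit_point:
  fixes X :: "nat \<Rightarrow> 'a::metric_space"
  assumes "compact S" and "\<And>n. X n \<in> S"
    and limit_point: "\<And>r l. strict_mono r \<Longrightarrow> (X \<circ> r) \<longlonglongrightarrow> l \<Longrightarrow> l = a"
  shows "X \<longlonglongrightarrow> a"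
proof (rule ccontr)
  assume "\<not> X \<longlonglongrightarrow> a"
  then obtain e where "e > 0" and "\<exists>\<^sub>F n in sequentially. e \<le> dist (X n) a"
    unfolding tendsto_iff by (auto simp: not_eventually not_less)
  then have inf: "infinite {n. e \<le> dist (X n) a}"
    by (simp add: frequently_cofinite[symmetric] cofinite_eq_sequentially)
  obtain r :: "nat \<Rightarrow> nat" where r: "strict_mono r" and far: "\<And>n. e \<le> dist (X (r n)) a"
    using infinite_enumerate[OF inf] by auto
  obtain l r' where r': "strict_mono r'" and lim: "(X \<circ> r \<circ> r') \<longlonglongrightarrow> l"
    using \<open>compact S\<close> assms(2) unfolding compact_def by (metis comp_apply)
  then have "l = a"
    using limit_point[of "r \<circ> r'"] strict_mono_o[OF r r'] by (simp add: o_assoc)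
  then have "\<forall>\<^sub>F n in sequentially. dist (X (r (r' n))) a < e"
    using lim \<open>e > 0\<close> unfolding tendsto_iff by simp
  then obtain N where "dist (X (r (r' N))) a < e"
    by (auto simp: eventually_sequentially)
  then show False
    using far[of "r' N"] by simp
qed

definition cesaro_implicit_iterates ::
    "'a::real_vector set \<Rightarrow> ('a \<Rightarrow> 'a) \<Rightarrow> ('a \<Rightarrow> 'a) \<Rightarrow> (nat \<Rightarrow> real) \<Rightarrow> (nat \<Rightarrow> 'a) \<Rightarrow> bool" where
  "cesaro_implicit_iterates C T f \<epsilon> z \<longleftrightarrow>
     (\<forall>n\<ge>1. z n \<in> C \<and> z n = \<epsilon> n *\<^sub>R f (z n) + (1 - \<epsilon> n) *\<^sub>R cesaro_mean T n (z n))"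

locale cesaro_implicit_scheme =
  fixes C :: "'a::real_inner set" and T f :: "'a \<Rightarrow> 'a" and \<epsilon> :: "nat \<Rightarrow> real" and z :: "nat \<Rightarrow> 'a"
  assumes compact_C: "compact C" and convex_C: "convex C"
    and T_into: "T ` C \<subseteq> C" and T_nonexpansive: "nonexpansive_on C T"
    and Fix_nonempty: "Fix C T \<noteq> {}"
    and f_into: "f ` C \<subseteq> C" and f_continuous: "continuous_on C f"
    and \<epsilon>_pos: "\<And>n. 0 < \<epsilon> n" and \<epsilon>_tendsto: "\<epsilon> \<longlonglongrightarrow> 0"
    and iterates: "cesaro_implicit_iterates C T f \<epsilon> z"
begin

lemma z_in: "1 \<le> n \<Longrightarrow> z n \<in> C"
  using iterates by (simp add: cesaro_implicit_iterates_def)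

lemma z_eq: "1 \<le> n \<Longrightarrow> z n = \<epsilon> n *\<^sub>R f (z n) + (1 - \<epsilon> n) *\<^sub>R cesaro_mean T n (z n)"
  using iterates by (simp add: cesaro_implicit_iterates_def)

lemma norm_diff_le_diameter: "x \<in> C \<Longrightarrow> y \<in> C \<Longrightarrow> norm (x - y) \<le> diameter C"
  using diameter_bounded_bound[OF compact_imp_bounded[OF compact_C]] by (simp add: dist_norm)

lemma scheme_estimates:
  assumes "1 \<le> n" "p \<in> Fix C T"
  shows "(norm (z n - T (z n)))\<^sup>2 \<le> 8 * \<epsilon> n * (diameter C)\<^sup>2"
    and "- (\<epsilon> n * (diameter C)\<^sup>2) \<le> inner (f (z n) - z n) (z n - p)"
proof -
  let ?S = "cesaro_mean T n (z n)"
  define X where "X = inner (f (z n) - ?S) (z n - p)"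
  have "z n \<in> C" "?S \<in> C" "f (z n) \<in> C" "p \<in> C"
    using z_in[OF assms(1)] cesaro_mean_in[OF convex_C T_into _ assms(1)] f_into assms(2)
    by (auto simp: Fix_def)
  have "z n - ?S = \<epsilon> n *\<^sub>R (f (z n) - ?S)"
    using z_eq[OF assms(1)] by (simp add: algebra_simps)
  then have "inner (z n - ?S) (z n - p) = \<epsilon> n * X"
    unfolding X_def by simp
  moreover have "(norm (z n - T (z n)))\<^sup>2 \<le> 8 * inner (z n - ?S) (z n - p)"
    using displacement_le_cesaro_inner[OF T_into T_nonexpansive \<open>z n \<in> C\<close> assms(2,1)] .
  ultimately have disp: "(norm (z n - T (z n)))\<^sup>2 \<le> 8 * (\<epsilon> n * X)"
    by simp
  then have "0 \<le> \<epsilon> n * X"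
    using zero_le_power2[of "norm (z n - T (z n))"] by linarith
  then have "0 \<le> X"
    using \<epsilon>_pos[of n] by (simp add: zero_le_mult_iff)
  have "X \<le> norm (f (z n) - ?S) * norm (z n - p)"
    unfolding X_def by (rule norm_cauchy_schwarz)
  also have "\<dots> \<le> diameter C * diameter C"
    using norm_diff_le_diameter \<open>z n \<in> C\<close> \<open>?S \<in> C\<close> \<open>f (z n) \<in> C\<close> \<open>p \<in> C\<close>
      diameter_ge_0[OF compact_imp_bounded[OF compact_C]]
    by (intro mult_mono) auto
  finally have "\<epsilon> n * X \<le> \<epsilon> n * (diameter C)\<^sup>2"
    using \<epsilon>_pos[of n] by (simp add: power2_eq_square)
  then show "(norm (z n - T (z n)))\<^sup>2 \<le> 8 * \<epsilon> n * (diameter C)\<^sup>2"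
    using disp by simp
  have "inner (f (z n) - z n) (z n - p) = X - inner (z n - ?S) (z n - p)"
    unfolding X_def by (simp add: inner_diff_left)
  then show "- (\<epsilon> n * (diameter C)\<^sup>2) \<le> inner (f (z n) - z n) (z n - p)"
    using \<open>inner (z n - ?S) (z n - p) = \<epsilon> n * X\<close> \<open>\<epsilon> n * X \<le> \<epsilon> n * (diameter C)\<^sup>2\<close> \<open>0 \<le> X\<close>
    by linarith
qed

lemma displacement_tendsto_zero: "(\<lambda>n. z n - T (z n)) \<longlonglongrightarrow> 0"
proof (rule Lim_null_comparison)
  obtain p where "p \<in> Fix C T"
    using Fix_nonempty by blast
  then show "\<forall>\<^sub>F n in sequentially. norm (z n - T (z n)) \<le> sqrt (8 * \<epsilon> n * (diameter C)\<^sup>2)"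
    using scheme_estimates(1) unfolding eventually_sequentially by (auto intro: real_le_rsqrt)
  have "(\<lambda>n. sqrt (8 * \<epsilon> n * (diameter C)\<^sup>2)) \<longlonglongrightarrow> sqrt (8 * 0 * (diameter C)\<^sup>2)"
    by (intro tendsto_intros \<epsilon>_tendsto)
  then show "(\<lambda>n. sqrt (8 * \<epsilon> n * (diameter C)\<^sup>2)) \<longlonglongrightarrow> 0"
    by simp
qed

lemma limit_point_fixed:
  assumes "strict_mono s" "(z \<circ> s) \<longlonglongrightarrow> l"
  shows "l \<in> Fix C T" and "metric_proj (Fix C T) (f l) = l"
proof -
  have ev_in: "\<forall>\<^sub>F j in sequentially. z (s j) \<in> C"
    using z_in seq_suble[OF assms(1)] unfolding eventually_sequentially
    by (metis order_trans)
  have zs: "(\<lambda>j. z (s j)) \<longlonglongrightarrow> l"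
    using assms(2) by (simp add: o_def)
  have "l \<in> C"
    using Lim_in_closed_set[OF compact_imp_closed[OF compact_C] ev_in _ zs] by simp
  have "(\<lambda>j. z (s j) - T (z (s j))) \<longlonglongrightarrow> 0"
    using LIMSEQ_subseq_LIMSEQ[OF displacement_tendsto_zero assms(1)] by (simp add: o_def)
  moreover have "(\<lambda>j. z (s j) - T (z (s j))) \<longlonglongrightarrow> l - T l"
    using nonexpansive_on_imp_continuous_on[OF T_nonexpansive]
    by (intro tendsto_diff zs continuous_on_tendsto_compose[OF _ zs \<open>l \<in> C\<close> ev_in])
  ultimately have "T l = l"
    using LIMSEQ_unique by fastforce
  then show "l \<in> Fix C T"
    using \<open>l \<in> C\<close> by (simp add: Fix_def)
  have "0 \<le> inner (f l - l) (l - p)" if "p \<in> Fix C T" for p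
  proof (rule tendsto_le[OF sequentially_bot])
    show "(\<lambda>j. inner (f (z (s j)) - z (s j)) (z (s j) - p)) \<longlonglongrightarrow> inner (f l - l) (l - p)"
      by (intro tendsto_intros zs continuous_on_tendsto_compose[OF f_continuous zs \<open>l \<in> C\<close> ev_in])
    have "(\<lambda>j. - (\<epsilon> (s j) * (diameter C)\<^sup>2)) \<longlonglongrightarrow> - (0 * (diameter C)\<^sup>2)"
      using LIMSEQ_subseq_LIMSEQ[OF \<epsilon>_tendsto assms(1)] by (intro tendsto_intros) (simp add: o_def)
    then show "(\<lambda>j. - (\<epsilon> (s j) * (diameter C)\<^sup>2)) \<longlonglongrightarrow> 0"
      by simp
    show "\<forall>\<^sub>F j in sequentially. - (\<epsilon> (s j) * (diameter C)\<^sup>2)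
            \<le> inner (f (z (s j)) - z (s j)) (z (s j) - p)"
      using scheme_estimates(2)[OF _ that] seq_suble[OF assms(1)]
      unfolding eventually_sequentially by (metis order_trans)
  qed
  then have "inner (f l - l) (p - l) \<le> 0" if "p \<in> Fix C T" for p
    using that by (fastforce simp: inner_diff_right)
  then show "metric_proj (Fix C T) (f l) = l"
    using compact_Fix[OF compact_C T_nonexpansive] convex_Fix[OF convex_C T_nonexpansive]
      \<open>l \<in> Fix C T\<close>
    by (intro metric_proj_eqI)
qed

theorem tendsto_unique_fixed_point:
  assumes "\<And>l. l \<in> Fix C T \<Longrightarrow> metric_proj (Fix C T) (f l) = l \<Longrightarrow> l = q"
  shows "z \<longlonglongrightarrow> q"
proof (rule LIMSEQ_imp_Suc)
  \<comment> \<open>The scheme says nothing about z 0.\<close>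
  show "(\<lambda>n. z (Suc n)) \<longlonglongrightarrow> q"
  proof (rule compact_LIMSEQ_if_unique_limit_point[OF compact_C])
    show "z (Suc n) \<in> C" for n
      using z_in by simp
    fix r l assume "strict_mono r" "((\<lambda>n. z (Suc n)) \<circ> r) \<longlonglongrightarrow> l"
    then have "strict_mono (Suc \<circ> r)" "(z \<circ> (Suc \<circ> r)) \<longlonglongrightarrow> l"
      by (auto simp: strict_mono_def o_def)
    then show "l = q"
      using assms limit_point_fixed by blast
  qed
qed

end

lemma metric_proj_comp_contraction_unique_fixed_point:
  fixes C D :: "'a::real_inner set"
  assumes "compact D" "convex D" "D \<noteq> {}" "D \<subseteq> C" "0 \<le> \<alpha>" "\<alpha> < 1"
    and contraction: "\<And>x y. x \<in> C \<Longrightarrow> y \<in> C \<Longrightarrow> norm (f x - f y) \<le> \<alpha> * norm (x - y)"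
  shows "\<exists>!q\<in>D. metric_proj D (f q) = q"
proof (rule Banach_fix[OF compact_imp_complete[OF assms(1)] assms(3,5,6)])
  show "(\<lambda>x. metric_proj D (f x)) ` D \<subseteq> D"
    using metric_proj_in[OF assms(1,3)] by blast
  fix x y assume "x \<in> D" "y \<in> D"
  then have "norm (metric_proj D (f x) - metric_proj D (f y)) \<le> \<alpha> * norm (x - y)"
    using metric_proj_nonexpansive[OF assms(1-3)] contraction assms(4) order_trans by blast
  then show "dist (metric_proj D (f x)) (metric_proj D (f y)) \<le> \<alpha> * dist x y"
    by (simp add: dist_norm)
qed

lemma cesaro_implicit_iterates_tendsto:
  fixes C :: "'a::real_inner set"
  assumes "compact C" "convex C" "T ` C \<subseteq> C" "nonexpansive_on C T" "Fix C T \<noteq> {}"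
    and "f ` C \<subseteq> C" "0 \<le> \<alpha>" "\<alpha> < 1"
    and contraction: "\<And>x y. x \<in> C \<Longrightarrow> y \<in> C \<Longrightarrow> norm (f x - f y) \<le> \<alpha> * norm (x - y)"
    and "\<And>n. 0 < \<epsilon> n" "\<epsilon> \<longlonglongrightarrow> 0"
  shows "\<exists>q. q \<in> Fix C T \<and> metric_proj (Fix C T) (f q) = q \<and>
           (\<forall>z. cesaro_implicit_iterates C T f \<epsilon> z \<longrightarrow> z \<longlonglongrightarrow> q)"
proof -
  have "\<exists>!q\<in>Fix C T. metric_proj (Fix C T) (f q) = q"
    by (rule metric_proj_comp_contraction_unique_fixed_point[OF compact_Fix[OF assms(1,4)]
          convex_Fix[OF assms(2,4)] assms(5) Fix_subset assms(7,8) contraction])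
  then obtain q where q: "q \<in> Fix C T" "metric_proj (Fix C T) (f q) = q"
    and unique: "\<And>l. l \<in> Fix C T \<Longrightarrow> metric_proj (Fix C T) (f l) = l \<Longrightarrow> l = q"
    by blast
  have "continuous_on C f"
    using contraction assms(7)
    by (intro lipschitz_on_continuous_on[of \<alpha>]) (simp add: lipschitz_on_def dist_norm)
  have "z \<longlonglongrightarrow> q" if "cesaro_implicit_iterates C T f \<epsilon> z" for z
  proof -
    interpret cesaro_implicit_scheme C T f \<epsilon> z
      using assms(1-6,10,11) \<open>continuous_on C f\<close> that by unfold_locales
    show ?thesis
      using unique by (rule tendsto_unique_fixed_point)
  qed
  with q show ?thesis
    by blast
qed

theorem corollary4p1:
  fixes I :: "'i set"
    and C :: "'i \<Rightarrow> 'a::{real_inner, complete_space} set"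
    and T f :: "'i \<Rightarrow> 'a \<Rightarrow> 'a"
    and \<alpha> :: "'i \<Rightarrow> real"
    and \<epsilon> :: "nat \<Rightarrow> real"
  assumes "I \<noteq> {}"
    and "\<And>i. i \<in> I \<Longrightarrow> C i \<noteq> {} \<and> compact (C i) \<and> convex (C i)"
    and "\<And>i. i \<in> I \<Longrightarrow> T i ` C i \<subseteq> C i \<and> nonexpansive_on (C i) (T i) \<and> Fix (C i) (T i) \<noteq> {}"
    and "\<And>i. i \<in> I \<Longrightarrow> f i ` C i \<subseteq> C i \<and> 0 \<le> \<alpha> i \<and> \<alpha> i < 1 \<and>
           (\<forall>x\<in>C i. \<forall>y\<in>C i. norm (f i x - f i y) \<le> \<alpha> i * norm (x - y))"
    and "\<And>n. 0 < \<epsilon> n \<and> \<epsilon> n < 1"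
    and "\<epsilon> \<longlonglongrightarrow> 0"
  shows "\<exists>P x. (\<forall>i\<in>I. sunny_nonexpansive_retraction (C i) (Fix (C i) (T i)) (P i)
              \<and> (\<forall>Q. sunny_nonexpansive_retraction (C i) (Fix (C i) (T i)) Q \<longrightarrow> (\<forall>y\<in>C i. Q y = P i y))
              \<and> x i \<in> C i)
          \<and> (\<forall>z :: nat \<Rightarrow> 'i \<Rightarrow> 'a.
               (\<forall>n\<ge>1. \<forall>i\<in>I. z n i \<in> C i \<and>
                  z n i = \<epsilon> n *\<^sub>R f i (z n i)
                     + (1 - \<epsilon> n) *\<^sub>R ((1 / real n) *\<^sub>R (\<Sum>k=1..n. (T i ^^ k) (z n i))))
               \<longrightarrow> limitin (product_topology (\<lambda>i. euclidean) I)
                     (\<lambda>n. restrict (z n) I) (restrict (\<lambda>i. P i (x i)) I) sequentially)"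
proof -
  define P where "P i = metric_proj (Fix (C i) (T i))" for i
  have "\<forall>i\<in>I. \<exists>q. q \<in> Fix (C i) (T i) \<and> P i (f i q) = q \<and>
          (\<forall>z. cesaro_implicit_iterates (C i) (T i) (f i) \<epsilon> z \<longrightarrow> z \<longlonglongrightarrow> q)"
  proof
    fix i assume "i \<in> I"
    then show "\<exists>q. q \<in> Fix (C i) (T i) \<and> P i (f i q) = q \<and>
          (\<forall>z. cesaro_implicit_iterates (C i) (T i) (f i) \<epsilon> z \<longrightarrow> z \<longlonglongrightarrow> q)"
      unfolding P_def using assms(2-4)[OF \<open>i \<in> I\<close>] assms(5,6)
      by (intro cesaro_implicit_iterates_tendsto[where \<alpha> = "\<alpha> i"]) auto
  qed
  from bchoice[OF this] obtain q where q: "\<forall>i\<in>I. q i \<in> Fix (C i) (T i) \<and> P i (f i (q i)) = q i \<and>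
      (\<forall>z. cesaro_implicit_iterates (C i) (T i) (f i) \<epsilon> z \<longrightarrow> z \<longlonglongrightarrow> q i)" ..
  show ?thesis
  proof (intro exI[of _ P] exI[of _ "\<lambda>i. f i (q i)"] conjI ballI allI impI)
    fix i assume "i \<in> I"
    then have "compact (C i)" "convex (C i)" "nonexpansive_on (C i) (T i)" "Fix (C i) (T i) \<noteq> {}"
      using assms(2,3) by simp_all
    note retraction = sunny_nonexpansive_retraction_onto_Fix[OF this]
    show "sunny_nonexpansive_retraction (C i) (Fix (C i) (T i)) (P i)"
      unfolding P_def by (rule retraction(1))
    show "f i (q i) \<in> C i"
      using assms(4) q \<open>i \<in> I\<close> Fix_subset[of "C i" "T i"] by blast
    fix Q y
    assume "sunny_nonexpansive_retraction (C i) (Fix (C i) (T i)) Q" "y \<in> C i"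
    then show "Q y = P i y"
      unfolding P_def by (rule retraction(2))
  next
    fix z :: "nat \<Rightarrow> 'i \<Rightarrow> 'a"
    assume "\<forall>n\<ge>1. \<forall>i\<in>I. z n i \<in> C i \<and> z n i = \<epsilon> n *\<^sub>R f i (z n i)
                     + (1 - \<epsilon> n) *\<^sub>R ((1 / real n) *\<^sub>R (\<Sum>k=1..n. (T i ^^ k) (z n i)))"
    then have "cesaro_implicit_iterates (C i) (T i) (f i) \<epsilon> (\<lambda>n. z n i)" if "i \<in> I" for i
      using that by (simp add: cesaro_implicit_iterates_def cesaro_mean_def)
    then have "(\<lambda>n. z n i) \<longlonglongrightarrow> P i (f i (q i))" if "i \<in> I" for i
      using q that by simp
    then show "limitin (product_topology (\<lambda>i. euclidean) I)
                 (\<lambda>n. restrict (z n) I) (restrict (\<lambda>i. P i (f i (q i))) I) sequentially"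
      by (simp add: limitin_componentwise)
  qed
qed

end
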